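(* Let $G$ be a connected directed multigraph on the vertex set $[n+1]$ with $m$ edges, each directed $i\to j$ with $i<j$, with at least one incoming edge at vertex $i$ for $i=2,\ldots,n+1$, and let ${\bf b}=(\sum_{i=1}^n b_i,-b_1,\ldots,-b_n)$ with $b_i\in\mathbb{Z}_{\ge0}$. Then \[ K_G({\bf b})=\sum_{{\bf j}}\binom{b_1+{\rm in}_2}{j_1}\cdots\binom{b_n+{\rm in}_{n+1}}{j_n}\cdot K_G(0,{\rm in}_2-j_1,{\rm in}_3-j_2,\ldots,{\rm in}_{n+1}-j_n), \] where ${\rm in}_i={\rm ind}_i-1$, ${\rm ind}_i$ is the indegree of vertex $i$, and the sum is over weak compositions ${\bf j}=(j_1,\ldots,j_n)$ of $m-n$ that are $\le({\rm in}_2,\ldots,{\rm in}_{n+1})$ in dominance order.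
   Context: $K_G({\bf v})$ (Kostant partition function), for ${\bf v}\in\mathbb{Z}^{n+1}$, is the number of $f\in\mathbb{Z}_{\ge0}^{E(G)}$ with outflow minus inflow at each vertex $k$ equal to $v_k$. For weak compositions ${\bf j},{\bf k}$ of the same integer, ${\bf j}\le{\bf k}$ in dominance order means $j_1+\cdots+j_l\le k_1+\cdots+k_l$ for all $l$. *)

theory Defs
  imports Main
begin

text \<open>A directed multigraph on vertex set [n+1] = {1..n+1} is a list of edges (i, j),
  each meaning an edge i -> j; repeated pairs give multiple edges.
  Edge e is the e-th list entry, e < length G.\<close>

type_synonym mgraph = "(nat \<times> nat) list"

definition netflow :: "mgraph \<Rightarrow> (nat \<Rightarrow> nat) \<Rightarrow> nat \<Rightarrow> int" where
  "netflow G f k =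
     (\<Sum>e\<in>{e. e < length G \<and> fst (G ! e) = k}. int (f e))
   - (\<Sum>e\<in>{e. e < length G \<and> snd (G ! e) = k}. int (f e))"

definition kostant :: "nat \<Rightarrow> mgraph \<Rightarrow> (nat \<Rightarrow> int) \<Rightarrow> nat" where
  "kostant n G v = card {f :: nat \<Rightarrow> nat. (\<forall>e. length G \<le> e \<longrightarrow> f e = 0) \<and>
                          (\<forall>k\<in>{1..n+1}. netflow G f k = v k)}"

definition indeg :: "mgraph \<Rightarrow> nat \<Rightarrow> nat" where
  "indeg G i = length (filter (\<lambda>e. snd e = i) G)"

definition connected_mgraph :: "nat \<Rightarrow> mgraph \<Rightarrow> bool" where
  "connected_mgraph n G \<longleftrightarrow>
     (\<forall>u\<in>{1..n+1}. \<forall>w\<in>{1..n+1}.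
        (\<lambda>x y. (x, y) \<in> set G \<or> (y, x) \<in> set G)\<^sup>*\<^sup>* u w)"

definition dom_below :: "nat \<Rightarrow> nat \<Rightarrow> (nat \<Rightarrow> nat) \<Rightarrow> (nat \<Rightarrow> nat) set" where
  "dom_below n s c = {j. (\<forall>i. i \<notin> {1..n} \<longrightarrow> j i = 0) \<and> (\<Sum>i=1..n. j i) = s \<and>
                         (\<forall>l\<in>{1..n}. (\<Sum>i=1..l. j i) \<le> (\<Sum>i=1..l. c i))}"

end

theory Submission
  imports Defs
begin

text \<open>
  Induction on the number of edges. Pick an edge p from vertex a + 1 into the last vertex
  n + 1 and condition on the flow x through it:
  K_G(v) = sum over x of K_{G-p}(v - x e_{a+1} + x e_{n+1}).
  For the left-hand side this moves x units of the demand b_n to b_a. For each Kostant factor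
  K_G(in - j) on the right it moves y units of j_n to j_a (and one more unit out of j_n, since
  in_{n+1} drops by one). After reindexing, both sides expand over the compositions j of G - p,
  and their binomial coefficients agree by the upper-index Vandermonde identity
  sum_x C(A+x, r) C(B-x+D, q) = sum_y C(A, r-y) C(B+D+1, q+y+1).
  If p was the only edge into n + 1, that vertex becomes isolated, x is forced to equal b_n,
  and ordinary Vandermonde does the job on n vertices.
  Compositions that are not dominated contribute nothing: in a graph whose edges go upwards
  the net outflow of the vertices 1, ..., l is nonnegative.
\<close>

section \<open>Flows on graphs whose edges go upwards\<close>

definition ascending :: "nat \<Rightarrow> mgraph \<Rightarrow> bool" where
  "ascending n G \<longleftrightarrow> (\<forall>(i, j)\<in>set G. 1 \<le> i \<and> i < j \<and> j \<le> n + 1)"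

definition flows :: "nat \<Rightarrow> mgraph \<Rightarrow> (nat \<Rightarrow> int) \<Rightarrow> (nat \<Rightarrow> nat) set" where
  "flows n G v = {f. (\<forall>e. length G \<le> e \<longrightarrow> f e = 0) \<and> (\<forall>k\<in>{1..n+1}. netflow G f k = v k)}"

lemma kostant_eq_card_flows: "kostant n G v = card (flows n G v)"
  by (simp add: kostant_def flows_def)

lemma ascending_nth:
  assumes "ascending n G" "e < length G"
  shows "1 \<le> fst (G ! e)" "fst (G ! e) < snd (G ! e)" "snd (G ! e) \<le> Suc n"
  using assms nth_mem[of e G] unfolding ascending_def by (cases "G ! e"; force)+

lemma kostant_cong:
  assumes "\<And>k. k \<in> {1..Suc n} \<Longrightarrow> v k = v' k"
  shows "kostant n G v = kostant n G v'"
  using assms by (simp add: kostant_eq_card_flows flows_def)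

lemma netflow_conv_sum:
  "netflow G f k = (\<Sum>e<length G. int (f e) *
     ((if fst (G ! e) = k then 1 else 0) - (if snd (G ! e) = k then 1 else 0)))"
proof -
  have filter: "(\<Sum>e\<in>{e. e < length G \<and> P e}. h e) = (\<Sum>e<length G. if P e then h e else 0)"
    for P and h :: "nat \<Rightarrow> int"
    by (simp add: sum.If_cases Collect_conj_eq lessThan_def Int_commute)
  show ?thesis
    unfolding netflow_def filter sum_subtractf[symmetric] by (rule sum.cong) auto
qed

lemma sum_weighted_netflow:
  assumes "ascending n G"
  shows "(\<Sum>k\<in>{1..Suc n}. w k * netflow G f k) =
    (\<Sum>e<length G. int (f e) * (w (fst (G ! e)) - w (snd (G ! e))))"
proof -
  have "(\<Sum>k\<in>{1..Suc n}. w k * netflow G f k) =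
     (\<Sum>e<length G. int (f e) * ((\<Sum>k\<in>{1..Suc n}. if fst (G ! e) = k then w k else 0)
        - (\<Sum>k\<in>{1..Suc n}. if snd (G ! e) = k then w k else 0)))"
    unfolding netflow_conv_sum sum_distrib_left sum_subtractf[symmetric]
    by (subst sum.swap) (auto intro!: sum.cong simp: algebra_simps)
  also have "\<dots> = (\<Sum>e<length G. int (f e) * (w (fst (G ! e)) - w (snd (G ! e))))"
  proof (rule sum.cong[OF refl])
    fix e assume "e \<in> {..<length G}"
    then have "fst (G ! e) \<in> {1..Suc n}" "snd (G ! e) \<in> {1..Suc n}"
      using ascending_nth[OF assms] by fastforce+
    then show "int (f e) * ((\<Sum>k\<in>{1..Suc n}. if fst (G ! e) = k then w k else 0)
        - (\<Sum>k\<in>{1..Suc n}. if snd (G ! e) = k then w k else 0))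
      = int (f e) * (w (fst (G ! e)) - w (snd (G ! e)))"
      by (simp add: sum.delta)
  qed
  finally show ?thesis .
qed

lemma finite_flows:
  assumes "ascending n G"
  shows "finite (flows n G v)"
proof -
  define Q where "Q = (\<Sum>k\<in>{1..Suc n}. int k * v k)"
  have bound: "f e \<le> nat (- Q)" if f: "f \<in> flows n G v" and e: "e < length G" for f e
  proof -
    have "(\<Sum>e<length G. int (f e) * (int (fst (G ! e)) - int (snd (G ! e)))) = Q"
      unfolding Q_def using sum_weighted_netflow[OF assms, of int f] f by (simp add: flows_def)
    moreover have "(\<Sum>e<length G. int (f e))
        \<le> (\<Sum>e<length G. - (int (f e) * (int (fst (G ! e)) - int (snd (G ! e)))))"
    proof (rule sum_mono)
      fix e assume "e \<in> {..<length G}"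
      then have "1 \<le> int (snd (G ! e)) - int (fst (G ! e))" using ascending_nth[OF assms] by force
      from mult_left_mono[OF this, of "int (f e)"]
      show "int (f e) \<le> - (int (f e) * (int (fst (G ! e)) - int (snd (G ! e))))"
        by (simp add: algebra_simps)
    qed
    moreover have "int (f e) \<le> (\<Sum>e<length G. int (f e))"
      using e by (intro member_le_sum) auto
    ultimately show ?thesis by (simp add: sum_negf)
  qed
  let ?bounded = "{f. \<forall>e. (e \<in> {..<length G} \<longrightarrow> f e \<in> {..nat (- Q)})
                       \<and> (e \<notin> {..<length G} \<longrightarrow> f e = (0::nat))}"
  have "flows n G v \<subseteq> ?bounded"
    using bound by (auto simp: flows_def)
  moreover have "finite ?bounded"
    by (rule finite_set_of_finite_funs) auto
  ultimately show ?thesis by (rule finite_subset)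
qed

lemma prefix_sum_netflow_nonneg:
  assumes "ascending n G" "L \<le> Suc n"
  shows "0 \<le> (\<Sum>k\<in>{1..L}. netflow G f k)"
proof -
  let ?w = "\<lambda>k. if k \<le> L then 1 else 0"
  have "(\<Sum>k\<in>{1..L}. netflow G f k) = (\<Sum>k\<in>{1..Suc n}. ?w k * netflow G f k)"
    using assms(2) by (intro sum.mono_neutral_cong_left) auto
  also have "\<dots> = (\<Sum>e<length G. int (f e) * (?w (fst (G ! e)) - ?w (snd (G ! e))))"
    by (rule sum_weighted_netflow[OF assms(1)])
  also have "0 \<le> \<dots>"
    using ascending_nth(2)[OF assms(1)] by (intro sum_nonneg) fastforce
  finally show ?thesis .
qed

lemma kostant_eq_0_if_prefix_sum_neg:
  assumes "ascending n G" "L \<le> Suc n" "(\<Sum>k\<in>{1..L}. v k) < 0"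
  shows "kostant n G v = 0"
proof -
  have "flows n G v = {}"
  proof (intro equals0I)
    fix f assume "f \<in> flows n G v"
    then have "(\<Sum>k\<in>{1..L}. netflow G f k) = (\<Sum>k\<in>{1..L}. v k)"
      using assms(2) by (intro sum.cong) (auto simp: flows_def)
    then show False
      using prefix_sum_netflow_nonneg[OF assms(1,2), of f] assms(3) by linarith
  qed
  then show ?thesis by (simp add: kostant_eq_card_flows)
qed

lemma netflow_top:
  assumes "ascending n G"
  shows "netflow G f (Suc n) = - (\<Sum>e\<in>{e. e < length G \<and> snd (G ! e) = Suc n}. int (f e))"
proof -
  have no_out: "{e. e < length G \<and> fst (G ! e) = Suc n} = {}"
    using ascending_nth[OF assms] by fastforce
  show ?thesis unfolding netflow_def no_out by simp
qed

lemma kostant_eq_0_if_top_pos: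
  assumes "ascending n G" "0 < v (Suc n)"
  shows "kostant n G v = 0"
proof -
  have "flows n G v = {}"
  proof (intro equals0I)
    fix f assume "f \<in> flows n G v"
    then have "netflow G f (Suc n) = v (Suc n)" by (simp add: flows_def)
    moreover have "netflow G f (Suc n) \<le> 0"
      unfolding netflow_top[OF assms(1)] by (simp add: sum_nonneg)
    ultimately show False using assms(2) by simp
  qed
  then show ?thesis by (simp add: kostant_eq_card_flows)
qed

lemma flow_le_top_demand:
  assumes "ascending n G" "f \<in> flows n G v" "p < length G" "snd (G ! p) = Suc n"
  shows "int (f p) \<le> - v (Suc n)"
proof -
  have "int (f p) \<le> (\<Sum>e\<in>{e. e < length G \<and> snd (G ! e) = Suc n}. int (f e))"
    using assms(3,4) by (intro member_le_sum) auto
  then show ?thesis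
    using assms(2) netflow_top[OF assms(1), of f] by (simp add: flows_def)
qed

lemma kostant_Suc_isolated_top:
  assumes "ascending n G"
  shows "kostant (Suc n) G v = (if v (Suc (Suc n)) = 0 then kostant n G v else 0)"
proof -
  have isolated: "{e. e < length G \<and> fst (G ! e) = Suc (Suc n)} = {}"
    "{e. e < length G \<and> snd (G ! e) = Suc (Suc n)} = {}"
    using ascending_nth[OF assms] by fastforce+
  have "netflow G f (Suc (Suc n)) = 0" for f
    unfolding netflow_def isolated by simp
  moreover have "(\<forall>k\<in>{1..Suc n + 1}. P k) \<longleftrightarrow> P (Suc (Suc n)) \<and> (\<forall>k\<in>{1..n + 1}. P k)" for P
    using atLeastAtMostSuc_conv[of 1 "Suc n"] by auto
  ultimately have "flows (Suc n) G v = (if v (Suc (Suc n)) = 0 then flows n G v else {})"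
    unfolding flows_def by auto
  then show ?thesis by (simp add: kostant_eq_card_flows)
qed

lemma ascending_Suc_no_top:
  assumes "ascending (Suc n) G" "indeg G (Suc (Suc n)) = 0"
  shows "ascending n G"
proof -
  have "(i, Suc (Suc n)) \<notin> set G" for i
    using assms(2) by (auto simp: indeg_def filter_empty_conv)
  then show ?thesis
    using assms(1) unfolding ascending_def by (fastforce simp: le_Suc_eq)
qed

lemma length_ge_if_incoming:
  assumes "\<forall>i\<in>{2..n+1}. 1 \<le> indeg G i"
  shows "n \<le> length G"
proof -
  have "(\<Sum>k\<in>K. indeg G k) \<le> length G" if "finite K" for K
  proof (induction G)
    case (Cons e G)
    have "(\<Sum>k\<in>K. indeg (e # G) k) = (\<Sum>k\<in>K. indeg G k) + (\<Sum>k\<in>K. if snd e = k then 1 else 0)"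
      unfolding sum.distrib[symmetric] by (rule sum.cong) (auto simp: indeg_def)
    also have "(\<Sum>k\<in>K. if snd e = k then 1 else 0) \<le> (1::nat)"
      using that by (simp add: sum.delta)
    finally show ?case using Cons by simp
  qed (simp add: indeg_def)
  moreover have "n = (\<Sum>k\<in>{2..n+1}. 1)" by simp
  moreover have "(\<Sum>k\<in>{2..n+1}. 1) \<le> (\<Sum>k\<in>{2..n+1}. indeg G k)"
    using assms by (intro sum_mono) auto
  ultimately show ?thesis by (metis finite_atLeastAtMost order_trans)
qed

section \<open>Deleting an edge\<close>

definition del_edge :: "nat \<Rightarrow> mgraph \<Rightarrow> mgraph" where
  "del_edge p G = take p G @ drop (Suc p) G"

lemma length_del_edge: "p < length G \<Longrightarrow> length (del_edge p G) = length G - 1"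
  by (simp add: del_edge_def)

lemma nth_del_edge:
  "p < length G \<Longrightarrow> e < length G - 1 \<Longrightarrow> del_edge p G ! e = G ! (if e < p then e else Suc e)"
  by (auto simp: del_edge_def nth_append min_def)

lemma ascending_del_edge: "ascending n G \<Longrightarrow> ascending n (del_edge p G)"
  unfolding ascending_def del_edge_def using set_take_subset set_drop_subset by fastforce

lemma indeg_del_edge:
  assumes "p < length G"
  shows "indeg (del_edge p G) k = indeg G k - (if snd (G ! p) = k then 1 else 0)"
proof -
  have G: "G = take p G @ G ! p # drop (Suc p) G"
    using assms by (simp add: id_take_nth_drop)
  have "indeg G k = indeg (del_edge p G) k + (if snd (G ! p) = k then 1 else 0)"
    unfolding indeg_def del_edge_def by (subst G) simp
  then show ?thesis by simp
qed

lemma netflow_del_edge: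
  assumes "p < length G" "G ! p = (s, t)" "\<forall>e. length G \<le> e \<longrightarrow> f e = 0"
  shows "netflow G f k = netflow (del_edge p G) (\<lambda>e. if e < p then f e else f (Suc e)) k
     + (if s = k then int (f p) else 0) - (if t = k then int (f p) else 0)"
proof -
  let ?F = "\<lambda>e. int (f e) *
    ((if fst (G ! e) = k then 1 else 0) - (if snd (G ! e) = k then 1 else 0))"
  let ?skip = "\<lambda>e. if e < p then e else Suc e"
  have "(\<Sum>e<length G. ?F e) = ?F p + (\<Sum>e\<in>{..<length G} - {p}. ?F e)"
    using assms(1) by (simp add: sum.remove)
  also have "(\<Sum>e\<in>{..<length G} - {p}. ?F e) = (\<Sum>e<length G - 1. ?F (?skip e))"
    by (rule sum.reindex_bij_witness[where i = ?skip and j = "\<lambda>e. if e < p then e else e - 1"])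
       (use assms(1) in auto)
  also have "(\<Sum>e<length G - 1. ?F (?skip e)) = (\<Sum>e<length (del_edge p G).
      int (if e < p then f e else f (Suc e)) * ((if fst (del_edge p G ! e) = k then 1 else 0)
        - (if snd (del_edge p G ! e) = k then 1 else 0)))"
    using assms(1) by (intro sum.cong) (auto simp: nth_del_edge length_del_edge)
  finally show ?thesis
    using assms(2) unfolding netflow_conv_sum by simp
qed

lemma kostant_del_edge:
  assumes asc: "ascending n G" and p: "p < length G" "G ! p = (s, t)"
    and X: "finite X" "\<And>f. f \<in> flows n G v \<Longrightarrow> f p \<in> X"
  shows "kostant n G v = (\<Sum>x\<in>X. kostant n (del_edge p G)
           (\<lambda>k. v k - (if k = s then int x else 0) + (if k = t then int x else 0)))"
proof -
  define v' where
    "v' x = (\<lambda>k. v k - (if k = s then int x else 0) + (if k = t then int x else 0))" for x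
  define skip where "skip f = (\<lambda>e. if e < p then f e else f (Suc e))" for f :: "nat \<Rightarrow> nat"
  define ins where "ins x g = (\<lambda>e. if e < p then g e else if e = p then x else g (e - 1))"
    for x and g :: "nat \<Rightarrow> nat"
  have len: "length (del_edge p G) = length G - 1" by (rule length_del_edge[OF p(1)])
  have "bij_betw (\<lambda>f. (f p, skip f)) (flows n G v) (SIGMA x:X. flows n (del_edge p G) (v' x))"
  proof (rule bij_betw_byWitness[where f' = "\<lambda>(x, g). ins x g"])
    show "\<forall>f\<in>flows n G v. (\<lambda>(x, g). ins x g) (f p, skip f) = f"
      by (auto simp: ins_def skip_def fun_eq_iff)
    show "\<forall>xg\<in>(SIGMA x:X. flows n (del_edge p G) (v' x)).
        (\<lambda>f. (f p, skip f)) ((\<lambda>(x, g). ins x g) xg) = xg"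
      by (auto simp: ins_def skip_def)
    show "(\<lambda>f. (f p, skip f)) ` flows n G v \<subseteq> (SIGMA x:X. flows n (del_edge p G) (v' x))"
    proof clarify
      fix f assume f: "f \<in> flows n G v"
      then have "\<forall>e. length G \<le> e \<longrightarrow> f e = 0" by (simp add: flows_def)
      then show "f p \<in> X \<and> skip f \<in> flows n (del_edge p G) (v' (f p))"
        using X(2)[OF f] f netflow_del_edge[OF p] len p(1)
        by (auto simp: flows_def skip_def v'_def)
    qed
    show "(\<lambda>(x, g). ins x g) ` (SIGMA x:X. flows n (del_edge p G) (v' x)) \<subseteq> flows n G v"
    proof clarify
      fix x g assume g: "g \<in> flows n (del_edge p G) (v' x)"
      then have zero: "\<forall>e. length G \<le> e \<longrightarrow> ins x g e = 0"
        using len p(1) by (auto simp: flows_def ins_def)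
      have "skip (ins x g) = g" "ins x g p = x" by (auto simp: skip_def ins_def)
      then show "ins x g \<in> flows n G v"
        using g zero netflow_del_edge[OF p zero] by (auto simp: flows_def skip_def v'_def)
    qed
  qed
  then have "card (flows n G v) = card (SIGMA x:X. flows n (del_edge p G) (v' x))"
    by (rule bij_betw_same_card)
  also have "\<dots> = (\<Sum>x\<in>X. card (flows n (del_edge p G) (v' x)))"
    using X(1) finite_flows[OF ascending_del_edge[OF asc]] by simp
  finally show ?thesis by (simp add: kostant_eq_card_flows v'_def)
qed

section \<open>Binomial identities\<close>

lemma sum_choose_mult_choose_upper:
  "(\<Sum>x\<le>N. (x choose y) * ((N - x) choose q)) = Suc N choose (y + q + 1)"
proof (induction N arbitrary: q)
  case 0
  then show ?case by (cases y; cases q) auto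
next
  case (Suc N)
  show ?case
  proof (cases q)
    case 0
    then show ?thesis using sum_choose_upper[where n = "Suc N" and m = y] by simp
  next
    case (Suc q')
    have "(\<Sum>x\<le>Suc N. (x choose y) * ((Suc N - x) choose q))
        = (\<Sum>x\<le>N. (x choose y) * ((N - x) choose q')) + (\<Sum>x\<le>N. (x choose y) * ((N - x) choose q))"
      unfolding sum.distrib[symmetric] using Suc
      by (simp add: Suc_diff_le algebra_simps)
    then show ?thesis using Suc Suc.IH by simp
  qed
qed

lemma sum_choose_shift_mult_choose:
  assumes "D \<le> q"
  shows "(\<Sum>x\<le>B. ((A + x) choose p) * ((B - x + D) choose q))
       = (\<Sum>y\<le>p. (A choose (p - y)) * ((B + D + 1) choose (q + y + 1)))"
proof -
  have "(\<Sum>x\<le>B. ((A + x) choose p) * ((B - x + D) choose q))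
      = (\<Sum>x\<le>B. \<Sum>y\<le>p. (A choose (p - y)) * ((x choose y) * ((B + D - x) choose q)))"
  proof (rule sum.cong[OF refl])
    fix x assume "x \<in> {..B}"
    then have "B - x + D = B + D - x" by auto
    then show "((A + x) choose p) * ((B - x + D) choose q)
        = (\<Sum>y\<le>p. (A choose (p - y)) * ((x choose y) * ((B + D - x) choose q)))"
      unfolding add.commute[of A x] vandermonde[of x A p, symmetric] sum_distrib_right
      by (simp add: algebra_simps)
  qed
  also have "\<dots> = (\<Sum>y\<le>p. (A choose (p - y)) * (\<Sum>x\<le>B. (x choose y) * ((B + D - x) choose q)))"
    by (subst sum.swap) (simp add: sum_distrib_left)
  also have "\<dots> = (\<Sum>y\<le>p. (A choose (p - y)) * ((B + D + 1) choose (q + y + 1)))"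
  proof (rule sum.cong[OF refl])
    fix y
    have "(\<Sum>x\<le>B. (x choose y) * ((B + D - x) choose q))
        = (\<Sum>x\<le>B + D. (x choose y) * ((B + D - x) choose q))"
      by (rule sum.mono_neutral_left) (use assms in auto)
    also have "\<dots> = (B + D + 1) choose (q + y + 1)"
      using sum_choose_mult_choose_upper[where N = "B + D" and y = y and q = q]
      by (simp add: ac_simps)
    finally show "(A choose (p - y)) * (\<Sum>x\<le>B. (x choose y) * ((B + D - x) choose q))
        = (A choose (p - y)) * ((B + D + 1) choose (q + y + 1))" by simp
  qed
  finally show ?thesis .
qed

lemma prod_atLeast1_remove:
  fixes h :: "nat \<Rightarrow> nat"
  assumes "h 0 = 1" "a \<le> N"
  shows "(\<Prod>i=1..N. h i) = h a * (\<Prod>i\<in>{..N} - {a}. h i)"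
proof -
  have "{..N} = insert 0 {1..N}" by auto
  then have "(\<Prod>i=1..N. h i) = (\<Prod>i\<le>N. h i)" using assms(1) by simp
  also have "\<dots> = h a * (\<Prod>i\<in>{..N} - {a}. h i)"
    using assms(2) by (simp add: prod.remove)
  finally show ?thesis .
qed

lemma prod_atLeast1_split2:
  fixes h :: "nat \<Rightarrow> nat"
  assumes "h 0 = 1" "a < N"
  shows "(\<Prod>i=1..N. h i) = h a * h N * (\<Prod>i\<in>{..N} - {a, N}. h i)"
proof -
  have "(\<Prod>i\<in>{..N} - {a}. h i) = h N * (\<Prod>i\<in>{..N} - {a} - {N}. h i)"
    using assms(2) by (simp add: prod.remove)
  moreover have "{..N} - {a} - {N} = {..N} - {a, N}" by auto
  ultimately show ?thesis
    using prod_atLeast1_remove[where h = h and a = a and N = N, OF assms(1)] assms(2) by simp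
qed

lemma sum_prod_choose_move_multiple:
  fixes b c j :: "nat \<Rightarrow> nat"
  assumes a: "a < N" and j0: "j 0 = 0" and c: "1 \<le> c N" "c N - 1 \<le> j N"
  shows "(\<Sum>x\<le>b N. \<Prod>i=1..N. ((b(N := b N - x, a := b a + x)) i + (c(N := c N - 1)) i) choose j i)
       = (\<Sum>y\<le>j a. \<Prod>i=1..N. (b i + c i) choose ((j(a := j a - y, N := j N + Suc y)) i))"
proof -
  define R where "R = (\<Prod>i\<in>{..N} - {a, N}. (b i + c i) choose j i)"
  have lhs: "(\<Prod>i=1..N. ((b(N := b N - x, a := b a + x)) i + (c(N := c N - 1)) i) choose j i)
      = ((b a + c a + x) choose j a) * ((b N - x + (c N - 1)) choose j N) * R" for x
    unfolding R_def using a j0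
    by (subst prod_atLeast1_split2[OF _ a]) (auto simp: algebra_simps intro!: prod.cong)
  have rhs: "(\<Prod>i=1..N. (b i + c i) choose ((j(a := j a - y, N := j N + Suc y)) i))
      = ((b a + c a) choose (j a - y)) * ((b N + c N) choose (j N + y + 1)) * R" if "y \<le> j a" for y
    unfolding R_def using a j0 that
    by (subst prod_atLeast1_split2[OF _ a]) (auto intro!: prod.cong)
  have "(\<Sum>x\<le>b N. \<Prod>i=1..N. ((b(N := b N - x, a := b a + x)) i + (c(N := c N - 1)) i) choose j i)
      = (\<Sum>x\<le>b N. ((b a + c a + x) choose j a) * ((b N - x + (c N - 1)) choose j N)) * R"
    unfolding sum_distrib_right by (rule sum.cong[OF refl lhs])
  also have "\<dots> = (\<Sum>y\<le>j a. ((b a + c a) choose (j a - y)) * ((b N + c N) choose (j N + y + 1))) * R"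
    using sum_choose_shift_mult_choose[OF c(2), where B = "b N" and A = "b a + c a" and p = "j a"]
      c(1)
    by simp
  also have "\<dots> = (\<Sum>y\<le>j a. \<Prod>i=1..N. (b i + c i) choose ((j(a := j a - y, N := j N + Suc y)) i))"
    unfolding sum_distrib_right by (intro sum.cong refl rhs[symmetric]) simp
  finally show ?thesis .
qed

lemma prod_choose_move_single:
  fixes b c j :: "nat \<Rightarrow> nat"
  assumes a: "a \<le> N" and j0: "j 0 = 0" and c: "c (Suc N) = 0"
  shows "(\<Prod>i=1..N. ((b(Suc N := 0, a := b a + b (Suc N))) i + c i) choose j i)
       = (\<Sum>y\<le>j a. \<Prod>i=1..Suc N. (b i + c i) choose ((j(a := j a - y, Suc N := y)) i))"
proof -
  define R where "R = (\<Prod>i\<in>{..N} - {a}. (b i + c i) choose j i)"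
  have lhs: "(\<Prod>i=1..N. ((b(Suc N := 0, a := b a + b (Suc N))) i + c i) choose j i)
      = ((b (Suc N) + (b a + c a)) choose j a) * R"
    unfolding R_def using a j0
    by (subst prod_atLeast1_remove[OF _ a]) (auto simp: algebra_simps intro!: prod.cong)
  have "{..Suc N} - {a, Suc N} = {..N} - {a}" by auto
  then have rhs: "(\<Prod>i=1..Suc N. (b i + c i) choose ((j(a := j a - y, Suc N := y)) i))
      = (b (Suc N) choose y) * ((b a + c a) choose (j a - y)) * R" if "y \<le> j a" for y
    unfolding R_def using a j0 c that
    by (subst prod_atLeast1_split2[where a = a]) (auto intro!: prod.cong)
  have vandermonde: "(b (Suc N) + (b a + c a)) choose j a
      = (\<Sum>y\<le>j a. (b (Suc N) choose y) * ((b a + c a) choose (j a - y)))"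
    by (rule vandermonde[symmetric])
  show ?thesis
    unfolding lhs vandermonde sum_distrib_right by (intro sum.cong refl rhs[symmetric]) simp
qed

section \<open>Weak compositions\<close>

definition wcomp :: "nat \<Rightarrow> nat \<Rightarrow> (nat \<Rightarrow> nat) set" where
  "wcomp n S = {j. (\<forall>i>n. j i = 0) \<and> (\<Sum>i\<le>n. j i) = S}"

lemma finite_wcomp: "finite (wcomp n S)"
proof -
  have "wcomp n S \<subseteq> {j. \<forall>i. (i \<in> {..n} \<longrightarrow> j i \<in> {..S}) \<and> (i \<notin> {..n} \<longrightarrow> j i = 0)}"
    unfolding wcomp_def by (auto intro: member_le_sum[THEN order_trans, of _ "{..n}"])
  moreover have "finite {j. \<forall>i. (i \<in> {..n} \<longrightarrow> j i \<in> {..S}) \<and> (i \<notin> {..n} \<longrightarrow> j i = (0::nat))}"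
    by (rule finite_set_of_finite_funs) auto
  ultimately show ?thesis by (rule finite_subset)
qed

lemma sum_fun_upd2:
  fixes J :: "nat \<Rightarrow> nat"
  assumes "a < N"
  shows "(\<Sum>i\<le>N. (J(a := u, N := w)) i) + J a + J N = (\<Sum>i\<le>N. J i) + u + (w::nat)"
proof -
  have upd: "sum (f(i := x)) {..N} + f i = sum f {..N} + x"
    if "i \<le> N" for f :: "nat \<Rightarrow> nat" and i x :: nat
    using that by (simp add: sum.remove)
  show ?thesis
    using upd[of N "J(a := u)" w] upd[of a J u] assms by simp
qed

lemma sum_wcomp_transfer:
  assumes "a < N" "1 \<le> S"
  shows "(\<Sum>J\<in>wcomp N S. \<Sum>y<J N. F J (J(a := J a + y, N := J N - Suc y)))
       = (\<Sum>j\<in>wcomp N (S - 1). \<Sum>y\<le>j a. F (j(a := j a - y, N := j N + Suc y)) j)"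
proof -
  have take: "J(a := J a + y, N := J N - Suc y) \<in> wcomp N (S - 1)"
    if "J \<in> wcomp N S" "y < J N" for J y
    using sum_fun_upd2[OF assms(1), of J "J a + y" "J N - Suc y"] that assms(1)
    by (auto simp: wcomp_def)
  have give: "j(a := j a - y, N := j N + Suc y) \<in> wcomp N S"
    if "j \<in> wcomp N (S - 1)" "y \<le> j a" for j y
    using sum_fun_upd2[OF assms(1), of j "j a - y" "j N + Suc y"] that assms
    by (auto simp: wcomp_def)
  have "(\<Sum>J\<in>wcomp N S. \<Sum>y<J N. F J (J(a := J a + y, N := J N - Suc y)))
      = (\<Sum>(J, y)\<in>(SIGMA J:wcomp N S. {..<J N}). F J (J(a := J a + y, N := J N - Suc y)))"
    by (rule sum.Sigma) (auto simp: finite_wcomp)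
  also have "\<dots> = (\<Sum>(j, y)\<in>(SIGMA j:wcomp N (S - 1). {..j a}).
      F (j(a := j a - y, N := j N + Suc y)) j)"
    by (rule sum.reindex_bij_witness[where i = "\<lambda>(j, y). (j(a := j a - y, N := j N + Suc y), y)"
          and j = "\<lambda>(J, y). (J(a := J a + y, N := J N - Suc y), y)"])
       (use assms(1) take give in \<open>auto simp: fun_eq_iff\<close>)
  also have "\<dots> = (\<Sum>j\<in>wcomp N (S - 1). \<Sum>y\<le>j a. F (j(a := j a - y, N := j N + Suc y)) j)"
    by (rule sum.Sigma[symmetric]) (auto simp: finite_wcomp)
  finally show ?thesis .
qed

lemma sum_wcomp_collapse_top:
  assumes "a < Suc N"
  shows "(\<Sum>J\<in>wcomp (Suc N) S. F J (J(a := J a + J (Suc N), Suc N := 0)))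
       = (\<Sum>j\<in>wcomp N S. \<Sum>y\<le>j a. F (j(a := j a - y, Suc N := y)) j)"
proof -
  have top0: "j (Suc N) = 0" if "j \<in> wcomp N S" for j
    using that by (simp add: wcomp_def)
  have take: "J(a := J a + J (Suc N), Suc N := 0) \<in> wcomp N S" if "J \<in> wcomp (Suc N) S" for J
    using sum_fun_upd2[OF assms, of J "J a + J (Suc N)" 0] that assms
    by (auto simp: wcomp_def)
  have give: "j(a := j a - y, Suc N := y) \<in> wcomp (Suc N) S" if "j \<in> wcomp N S" "y \<le> j a" for j y
    using sum_fun_upd2[OF assms, of j "j a - y" y] that assms top0[OF that(1)]
    by (auto simp: wcomp_def)
  have "(\<Sum>J\<in>wcomp (Suc N) S. F J (J(a := J a + J (Suc N), Suc N := 0)))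
      = (\<Sum>(j, y)\<in>(SIGMA j:wcomp N S. {..j a}). F (j(a := j a - y, Suc N := y)) j)"
    by (rule sum.reindex_bij_witness[where i = "\<lambda>(j, y). j(a := j a - y, Suc N := y)"
          and j = "\<lambda>J. (J(a := J a + J (Suc N), Suc N := 0), J (Suc N))"])
       (use assms take give top0 in \<open>auto simp: fun_eq_iff\<close>)
  also have "\<dots> = (\<Sum>j\<in>wcomp N S. \<Sum>y\<le>j a. F (j(a := j a - y, Suc N := y)) j)"
    by (rule sum.Sigma[symmetric]) (auto simp: finite_wcomp)
  finally show ?thesis .
qed

section \<open>The expansion\<close>

text \<open>
  Part i of a composition j and reduced_indeg G i belong to vertex i + 1. Part 0, at vertex 1
  (which has no incoming edges), is admitted so that moving units to the tail of an edge
  leaving vertex 1 needs no special case; it forces kostant_excess to vanish.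
\<close>

definition reduced_indeg :: "mgraph \<Rightarrow> nat \<Rightarrow> nat" where
  "reduced_indeg G i = indeg G (i + 1) - 1"

definition binom_weight :: "nat \<Rightarrow> mgraph \<Rightarrow> (nat \<Rightarrow> nat) \<Rightarrow> (nat \<Rightarrow> nat) \<Rightarrow> nat" where
  "binom_weight n G b j = (\<Prod>i=1..n. (b i + reduced_indeg G i) choose j i)"

definition kostant_excess :: "nat \<Rightarrow> mgraph \<Rightarrow> (nat \<Rightarrow> nat) \<Rightarrow> nat" where
  "kostant_excess n G j = kostant n G (\<lambda>k. int (reduced_indeg G (k - 1)) - int (j (k - 1)))"

definition supply_vec :: "nat \<Rightarrow> (nat \<Rightarrow> nat) \<Rightarrow> nat \<Rightarrow> int" where
  "supply_vec n b = (\<lambda>k. if k = 1 then int (\<Sum>i=1..n. b i) else - int (b (k - 1)))"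

lemma supply_vec_move:
  assumes "a < N" "x \<le> b N" "1 \<le> k"
  shows "supply_vec N (b(N := b N - x, a := b a + x)) k
       = supply_vec N b k - (if k = Suc a then int x else 0) + (if k = Suc N then int x else 0)"
proof -
  have moved: "int ((b(N := b N - x, a := b a + x)) i)
      = int (b i) - (if i = N then int x else 0) + (if i = a then int x else 0)" for i
    using assms(1,2) by auto
  show ?thesis
  proof (cases "k = 1")
    case True
    have "a \<in> {1..N} \<longleftrightarrow> Suc a \<noteq> 1" using assms(1) by auto
    then show ?thesis
      using True assms(1) unfolding supply_vec_def of_nat_sum moved
      by (simp add: sum.distrib sum_subtractf)
  next
    case False
    then have "k - 1 = a \<longleftrightarrow> k = Suc a" "k - 1 = N \<longleftrightarrow> k = Suc N" using assms(3) by auto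
    then show ?thesis using False unfolding supply_vec_def moved by simp
  qed
qed

lemma supply_vec_Suc:
  assumes "b (Suc n) = 0"
  shows "supply_vec (Suc n) b = supply_vec n b"
proof -
  have top: "(\<Sum>i=1..Suc n. b i) = (\<Sum>i=1..n. b i)" using assms by simp
  show ?thesis unfolding supply_vec_def top ..
qed

lemma reduced_indeg_0:
  assumes "ascending n G"
  shows "reduced_indeg G 0 = 0"
proof -
  have "filter (\<lambda>e. snd e = 1) G = []"
    using assms by (force simp: ascending_def filter_empty_conv)
  then show ?thesis by (simp add: reduced_indeg_def indeg_def)
qed

lemma kostant_excess_eq_0_if_prefix_exceeds:
  assumes "ascending n G" "l \<le> n" "(\<Sum>i\<le>l. reduced_indeg G i) < (\<Sum>i\<le>l. j i)"
  shows "kostant_excess n G j = 0"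
  unfolding kostant_excess_def
proof (rule kostant_eq_0_if_prefix_sum_neg[OF assms(1), where L = "Suc l"])
  have "(\<Sum>k\<in>{1..Suc l}. int (reduced_indeg G (k - 1)) - int (j (k - 1)))
      = (\<Sum>i\<le>l. int (reduced_indeg G i) - int (j i))"
    using sum.shift_bounds_cl_Suc_ivl[of "\<lambda>k. int (reduced_indeg G (k - 1)) - int (j (k - 1))" 0 l]
    by (simp add: atLeast0AtMost)
  also have "\<dots> < 0"
    using assms(3) by (simp add: sum_subtractf flip: of_nat_sum)
  finally show "(\<Sum>k\<in>{1..Suc l}. int (reduced_indeg G (k - 1)) - int (j (k - 1))) < 0" .
qed (use assms(2) in simp)

lemma kostant_excess_eq_0_if_first_pos:
  "ascending n G \<Longrightarrow> 0 < j 0 \<Longrightarrow> kostant_excess n G j = 0"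
  by (rule kostant_excess_eq_0_if_prefix_exceeds[where l = 0]) (auto simp: reduced_indeg_0)

lemma kostant_excess_eq_0_if_top_pos:
  "ascending n G \<Longrightarrow> j n < reduced_indeg G n \<Longrightarrow> kostant_excess n G j = 0"
  unfolding kostant_excess_def by (rule kostant_eq_0_if_top_pos) auto

locale top_edge =
  fixes N :: nat and G :: mgraph and p a :: nat
  assumes asc: "ascending N G" and p: "p < length G" and edge: "G ! p = (Suc a, Suc N)"
begin

abbreviation G0 :: mgraph where "G0 \<equiv> del_edge p G"

lemma a_less: "a < N"
  using ascending_nth(2)[OF asc p] edge by simp

lemma length_G0: "length G0 = length G - 1"
  by (rule length_del_edge[OF p])

lemma indeg_G0: "indeg G0 k = indeg G k - (if k = Suc N then 1 else 0)"
  using indeg_del_edge[OF p] edge by simp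

lemma ascending_G0: "ascending N G0"
  by (rule ascending_del_edge[OF asc])

lemma reduced_indeg_G0: "reduced_indeg G0 = (reduced_indeg G)(N := reduced_indeg G N - 1)"
  by (auto simp: fun_eq_iff reduced_indeg_def indeg_G0)

lemma ascending_G0_single:
  assumes "indeg G (Suc N) = 1" "N = Suc M"
  shows "ascending M G0"
  using ascending_Suc_no_top[of M G0] ascending_del_edge[OF asc] indeg_G0 assms by simp

lemma kostant_supply_del:
  "kostant N G (supply_vec N b)
    = (\<Sum>x\<le>b N. kostant N G0 (supply_vec N (b(N := b N - x, a := b a + x))))"
proof -
  have "kostant N G (supply_vec N b) = (\<Sum>x\<le>b N. kostant N G0
      (\<lambda>k. supply_vec N b k - (if k = Suc a then int x else 0) + (if k = Suc N then int x else 0)))"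
  proof (rule kostant_del_edge[OF asc p edge])
    fix f assume "f \<in> flows N G (supply_vec N b)"
    from flow_le_top_demand[OF asc this p] show "f p \<in> {..b N}"
      using edge a_less by (simp add: supply_vec_def)
  qed simp
  also have "\<dots> = (\<Sum>x\<le>b N. kostant N G0 (supply_vec N (b(N := b N - x, a := b a + x))))"
    by (intro sum.cong refl kostant_cong) (simp add: supply_vec_move[OF a_less])
  finally show ?thesis .
qed

lemma kostant_supply_del_single:
  assumes "indeg G (Suc N) = 1" "N = Suc M"
  shows "kostant N G (supply_vec N b) = kostant M G0 (supply_vec M (b(N := 0, a := b a + b N)))"
proof -
  let ?b = "\<lambda>x. b(N := b N - x, a := b a + x)"
  have isolated: "kostant N G0 w = (if w (Suc N) = 0 then kostant M G0 w else 0)" for w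
    using kostant_Suc_isolated_top[OF ascending_G0_single[OF assms]] assms(2) by simp
  have top: "supply_vec N (?b x) (Suc N) = 0 \<longleftrightarrow> x = b N" if "x \<le> b N" for x
    using that a_less by (simp add: supply_vec_def)
  have "kostant N G (supply_vec N b) = (\<Sum>x\<le>b N. kostant N G0 (supply_vec N (?b x)))"
    by (rule kostant_supply_del)
  also have "\<dots> = (\<Sum>x\<le>b N. if x = b N then kostant M G0 (supply_vec N (?b x)) else 0)"
    by (intro sum.cong refl) (simp add: isolated top)
  also have "\<dots> = kostant M G0 (supply_vec N (?b (b N)))"
    by simp
  also have "?b (b N) = b(N := 0, a := b a + b N)"
    by simp
  also have "supply_vec N (b(N := 0, a := b a + b N)) = supply_vec M (b(N := 0, a := b a + b N))"
    using supply_vec_Suc[of "b(N := 0, a := b a + b N)" M] a_less assms(2) by simp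
  finally show ?thesis .
qed

lemma kostant_excess_del_multiple:
  assumes "2 \<le> indeg G (Suc N)"
  shows "kostant_excess N G J = (\<Sum>y<J N. kostant_excess N G0 (J(a := J a + y, N := J N - Suc y)))"
proof -
  let ?v = "\<lambda>k. int (reduced_indeg G (k - 1)) - int (J (k - 1))"
  have "kostant_excess N G J = (\<Sum>y<J N. kostant N G0
      (\<lambda>k. ?v k - (if k = Suc a then int y else 0) + (if k = Suc N then int y else 0)))"
    unfolding kostant_excess_def
  proof (rule kostant_del_edge[OF asc p edge])
    fix f assume "f \<in> flows N G ?v"
    from flow_le_top_demand[OF asc this p] show "f p \<in> {..<J N}"
      using edge assms by (simp add: reduced_indeg_def)
  qed simp
  also have "\<dots> = (\<Sum>y<J N. kostant_excess N G0 (J(a := J a + y, N := J N - Suc y)))"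
    unfolding kostant_excess_def reduced_indeg_G0
  proof (intro sum.cong refl kostant_cong)
    fix y k assume "y \<in> {..<J N}" "k \<in> {1..Suc N}"
    moreover have "1 \<le> reduced_indeg G N" using assms by (simp add: reduced_indeg_def)
    ultimately show "?v k - (if k = Suc a then int y else 0) + (if k = Suc N then int y else 0)
        = int (((reduced_indeg G)(N := reduced_indeg G N - 1)) (k - 1))
          - int ((J(a := J a + y, N := J N - Suc y)) (k - 1))"
      using a_less by (cases k) auto
  qed
  finally show ?thesis .
qed

lemma kostant_excess_del_single:
  assumes "indeg G (Suc N) = 1" "N = Suc M"
  shows "kostant_excess N G J = kostant_excess M G0 (J(a := J a + J N, N := 0))"
proof -
  let ?v = "\<lambda>x k. int (reduced_indeg G (k - 1)) - int (J (k - 1))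
      - (if k = Suc a then int x else 0) + (if k = Suc N then int x else 0)"
  have top: "reduced_indeg G N = 0" using assms(1) by (simp add: reduced_indeg_def)
  have "kostant_excess N G J = (\<Sum>x\<le>J N. kostant N G0 (?v x))"
    unfolding kostant_excess_def
  proof (rule kostant_del_edge[OF asc p edge])
    fix f assume "f \<in> flows N G (\<lambda>k. int (reduced_indeg G (k - 1)) - int (J (k - 1)))"
    from flow_le_top_demand[OF asc this p] show "f p \<in> {..J N}"
      using edge top by simp
  qed simp
  also have "\<dots> = (\<Sum>x\<le>J N. if x = J N then kostant M G0 (?v x) else 0)"
    using a_less assms(2) top
    by (intro sum.cong refl) (auto simp: kostant_Suc_isolated_top[OF ascending_G0_single[OF assms]])
  also have "\<dots> = kostant M G0 (?v (J N))" by simp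
  also have "\<dots> = kostant_excess M G0 (J(a := J a + J N, N := 0))"
    unfolding kostant_excess_def reduced_indeg_G0
    by (rule kostant_cong) (use a_less assms(2) in \<open>auto simp: Suc_le_eq\<close>)
  finally show ?thesis .
qed

lemma binom_weight_move_multiple:
  assumes "2 \<le> indeg G (Suc N)" "j 0 = 0" "reduced_indeg G0 N \<le> j N"
  shows "(\<Sum>y\<le>j a. binom_weight N G b (j(a := j a - y, N := j N + Suc y)))
       = (\<Sum>x\<le>b N. binom_weight N G0 (b(N := b N - x, a := b a + x)) j)"
proof -
  have "1 \<le> reduced_indeg G N" using assms(1) by (simp add: reduced_indeg_def)
  then show ?thesis
    using sum_prod_choose_move_multiple[where c = "reduced_indeg G" and b = b and j = j,
        OF a_less assms(2)] assms(3)
    unfolding binom_weight_def reduced_indeg_G0 by simp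
qed

lemma binom_weight_move_single:
  assumes "indeg G (Suc N) = 1" "N = Suc M" "j 0 = 0"
  shows "(\<Sum>y\<le>j a. binom_weight N G b (j(a := j a - y, N := y)))
       = binom_weight M G0 (b(N := 0, a := b a + b N)) j"
proof -
  have "binom_weight M G0 (b(N := 0, a := b a + b N)) j
      = (\<Prod>i=1..M. ((b(Suc M := 0, a := b a + b (Suc M))) i + reduced_indeg G i) choose j i)"
    unfolding binom_weight_def reduced_indeg_G0 using assms(2) by (intro prod.cong) auto
  also have "\<dots> = (\<Sum>y\<le>j a. \<Prod>i=1..Suc M.
      (b i + reduced_indeg G i) choose ((j(a := j a - y, Suc M := y)) i))"
    by (rule prod_choose_move_single) (use a_less assms in \<open>auto simp: reduced_indeg_def\<close>)
  finally show ?thesis unfolding binom_weight_def assms(2) ..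
qed

lemma expansion_step_multiple:
  assumes two: "2 \<le> indeg G (Suc N)" and long: "N < length G"
    and IH: "\<And>b. kostant N G0 (supply_vec N b) =
       (\<Sum>j\<in>wcomp N (length G0 - N). binom_weight N G0 b j * kostant_excess N G0 j)"
  shows "kostant N G (supply_vec N b) =
    (\<Sum>J\<in>wcomp N (length G - N). binom_weight N G b J * kostant_excess N G J)"
proof -
  define S where "S = length G - N"
  have S: "1 \<le> S" "length G0 - N = S - 1" using long length_G0 by (auto simp: S_def)
  let ?b = "\<lambda>x. b(N := b N - x, a := b a + x)"
  have "(\<Sum>J\<in>wcomp N S. binom_weight N G b J * kostant_excess N G J)
      = (\<Sum>J\<in>wcomp N S. \<Sum>y<J N.
          binom_weight N G b J * kostant_excess N G0 (J(a := J a + y, N := J N - Suc y)))"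
    by (simp add: kostant_excess_del_multiple[OF two] sum_distrib_left)
  also have "\<dots> = (\<Sum>j\<in>wcomp N (S - 1). \<Sum>y\<le>j a.
      binom_weight N G b (j(a := j a - y, N := j N + Suc y)) * kostant_excess N G0 j)"
    by (rule sum_wcomp_transfer[OF a_less S(1),
          where F = "\<lambda>J j. binom_weight N G b J * kostant_excess N G0 j"])
  also have "\<dots> = (\<Sum>j\<in>wcomp N (S - 1). \<Sum>x\<le>b N. binom_weight N G0 (?b x) j * kostant_excess N G0 j)"
  proof (rule sum.cong[OF refl])
    fix j
    show "(\<Sum>y\<le>j a. binom_weight N G b (j(a := j a - y, N := j N + Suc y)) * kostant_excess N G0 j)
        = (\<Sum>x\<le>b N. binom_weight N G0 (?b x) j * kostant_excess N G0 j)"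
    proof (cases "0 < j 0 \<or> j N < reduced_indeg G0 N")
      case True
      then have "kostant_excess N G0 j = 0"
        using kostant_excess_eq_0_if_first_pos kostant_excess_eq_0_if_top_pos ascending_G0 by blast
      then show ?thesis by simp
    next
      case False
      then show ?thesis
        using binom_weight_move_multiple[where b = b and j = j, OF two]
        by (simp add: sum_distrib_right[symmetric])
    qed
  qed
  also have "\<dots> = (\<Sum>x\<le>b N. kostant N G0 (supply_vec N (?b x)))"
    by (subst sum.swap) (simp add: IH S(2))
  also have "\<dots> = kostant N G (supply_vec N b)"
    by (rule kostant_supply_del[symmetric])
  finally show ?thesis by (simp add: S_def)
qed

lemma expansion_step_single:
  assumes one: "indeg G (Suc N) = 1" and N: "N = Suc M"
    and IH: "\<And>b. kostant M G0 (supply_vec M b) =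
       (\<Sum>j\<in>wcomp M (length G0 - M). binom_weight M G0 b j * kostant_excess M G0 j)"
  shows "kostant N G (supply_vec N b) =
    (\<Sum>J\<in>wcomp N (length G - N). binom_weight N G b J * kostant_excess N G J)"
proof -
  define S where "S = length G - N"
  have S: "length G0 - M = S" using length_G0 N by (simp add: S_def)
  let ?b = "b(N := 0, a := b a + b N)"
  have "(\<Sum>J\<in>wcomp N S. binom_weight N G b J * kostant_excess N G J)
      = (\<Sum>J\<in>wcomp (Suc M) S.
          binom_weight N G b J * kostant_excess M G0 (J(a := J a + J (Suc M), Suc M := 0)))"
    using kostant_excess_del_single[OF one N] N by simp
  also have "\<dots> = (\<Sum>j\<in>wcomp M S. \<Sum>y\<le>j a.
      binom_weight N G b (j(a := j a - y, Suc M := y)) * kostant_excess M G0 j)"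
    using a_less N
    by (intro sum_wcomp_collapse_top[where
          F = "\<lambda>J j. binom_weight N G b J * kostant_excess M G0 j"]) simp
  also have "\<dots> = (\<Sum>j\<in>wcomp M S. binom_weight M G0 ?b j * kostant_excess M G0 j)"
  proof (rule sum.cong[OF refl])
    fix j
    show "(\<Sum>y\<le>j a. binom_weight N G b (j(a := j a - y, Suc M := y)) * kostant_excess M G0 j)
        = binom_weight M G0 ?b j * kostant_excess M G0 j"
    proof (cases "j 0 = 0")
      case True
      then show ?thesis
        using binom_weight_move_single[where b = b and j = j, OF one N True] N
        by (simp add: sum_distrib_right[symmetric])
    next
      case False
      then have "kostant_excess M G0 j = 0"
        using kostant_excess_eq_0_if_first_pos[OF ascending_G0_single[OF one N]] by simp
      then show ?thesis by simp
    qed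
  qed
  also have "\<dots> = kostant M G0 (supply_vec M ?b)"
    by (simp add: IH S)
  also have "\<dots> = kostant N G (supply_vec N b)"
    by (rule kostant_supply_del_single[OF one N, symmetric])
  finally show ?thesis by (simp add: S_def)
qed

end

lemma kostant_supply_expansion:
  assumes "ascending n G" "\<forall>i\<in>{2..n+1}. 1 \<le> indeg G i"
  shows "kostant n G (supply_vec n b) =
    (\<Sum>j\<in>wcomp n (length G - n). binom_weight n G b j * kostant_excess n G j)"
  using assms
proof (induction "length G" arbitrary: n G b rule: less_induct)
  case less
  show ?case
  proof (cases n)
    case 0
    have "G = []"
      using ascending_nth[OF less.prems(1), of 0] 0 by (cases G) auto
    moreover have "wcomp 0 0 = {\<lambda>_. 0}"
      by (auto simp: wcomp_def fun_eq_iff) (metis neq0_conv)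
    ultimately show ?thesis
      using 0 unfolding binom_weight_def kostant_excess_def
      by (simp, intro kostant_cong) (auto simp: supply_vec_def reduced_indeg_def indeg_def)
  next
    case (Suc M)
    have "1 \<le> indeg G (Suc n)" using less.prems(2) Suc by auto
    then have "filter (\<lambda>e. snd e = Suc n) G \<noteq> []" by (auto simp: indeg_def)
    then obtain p where p: "p < length G" "snd (G ! p) = Suc n"
      by (auto simp: filter_empty_conv in_set_conv_nth)
    then obtain a where edge: "G ! p = (Suc a, Suc n)"
      using ascending_nth(1)[OF less.prems(1) p(1)] by (cases "G ! p") (auto dest!: Suc_le_D)
    interpret top_edge n G p a
      using less.prems(1) p(1) edge by unfold_locales
    have shorter: "length G0 < length G" using length_G0 p(1) by simp
    consider "indeg G (Suc n) = 1" | "2 \<le> indeg G (Suc n)"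
      using \<open>1 \<le> indeg G (Suc n)\<close> by linarith
    then show ?thesis
    proof cases
      case 1
      have "\<forall>i\<in>{2..M+1}. 1 \<le> indeg G0 i"
        using less.prems(2) Suc by (auto simp: indeg_G0)
      from less.hyps[OF shorter ascending_G0_single[OF 1 Suc] this]
      show ?thesis by (rule expansion_step_single[OF 1 Suc])
    next
      case 2
      have incoming: "\<forall>i\<in>{2..n+1}. 1 \<le> indeg G0 i"
        using less.prems(2) 2 by (auto simp: indeg_G0)
      have "n < length G"
        using length_ge_if_incoming[OF incoming] length_G0 p(1) by simp
      from expansion_step_multiple[OF 2 this less.hyps[OF shorter ascending_G0 incoming]]
      show ?thesis .
    qed
  qed
qed

lemma wcomp_iff_support_1:
  fixes j :: "nat \<Rightarrow> nat"
  assumes "j 0 = 0"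
  shows "j \<in> wcomp n S \<longleftrightarrow> (\<forall>i. i \<notin> {1..n} \<longrightarrow> j i = 0) \<and> (\<Sum>i=1..n. j i) = S"
proof -
  have "i \<notin> {1..n} \<longleftrightarrow> i = 0 \<or> n < i" for i by auto
  then show ?thesis
    using assms sum_shift_lb_Suc0_0[of j n] by (auto simp: wcomp_def atLeast0AtMost)
qed

lemma dom_below_subset_wcomp: "dom_below n S c \<subseteq> wcomp n S"
  by (auto simp: dom_below_def wcomp_iff_support_1)

lemma kostant_excess_eq_0_if_not_dominated:
  assumes asc: "ascending n G" and j: "j \<in> wcomp n S" "j \<notin> dom_below n S (reduced_indeg G)"
  shows "kostant_excess n G j = 0"
proof (cases "j 0 = 0")
  case False
  then show ?thesis using kostant_excess_eq_0_if_first_pos[OF asc] by simp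
next
  case True
  then obtain l where l: "l \<in> {1..n}"
    and exceeds: "(\<Sum>i=1..l. reduced_indeg G i) < (\<Sum>i=1..l. j i)"
    using j by (auto simp: dom_below_def wcomp_iff_support_1 not_le)
  have "(\<Sum>i=1..l. f i) = (\<Sum>i\<le>l. f i)" if "f 0 = 0" for f :: "nat \<Rightarrow> nat"
    using sum_shift_lb_Suc0_0[of f l] that by (simp add: atLeast0AtMost)
  then have "(\<Sum>i\<le>l. reduced_indeg G i) < (\<Sum>i\<le>l. j i)"
    using exceeds True reduced_indeg_0[OF asc] by metis
  then show ?thesis
    by (rule kostant_excess_eq_0_if_prefix_exceeds[OF asc, rotated]) (use l in simp)
qed

theorem corollary5p7:
  fixes n :: nat and G :: mgraph and b :: "nat \<Rightarrow> nat"
  assumes edges: "\<forall>(i, j)\<in>set G. 1 \<le> i \<and> i < j \<and> j \<le> n + 1"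
    and conn: "connected_mgraph n G"
    and incoming: "\<forall>i\<in>{2..n+1}. indeg G i \<ge> 1"
  shows "kostant n G (\<lambda>k. if k = 1 then int (\<Sum>i=1..n. b i) else - int (b (k - 1)))
       = (\<Sum>j\<in>dom_below n (length G - n) (\<lambda>i. indeg G (i + 1) - 1).
            (\<Prod>i=1..n. (b i + (indeg G (i + 1) - 1)) choose (j i))
            * kostant n G (\<lambda>k. if k = 1 then 0
                               else int (indeg G k - 1) - int (j (k - 1))))"
proof -
  have asc: "ascending n G" using edges by (simp add: ascending_def)
  let ?D = "dom_below n (length G - n) (reduced_indeg G)"
  have "kostant n G (supply_vec n b)
      = (\<Sum>j\<in>wcomp n (length G - n). binom_weight n G b j * kostant_excess n G j)"
    by (rule kostant_supply_expansion[OF asc incoming])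
  also have "\<dots> = (\<Sum>j\<in>?D. binom_weight n G b j * kostant_excess n G j)"
    using kostant_excess_eq_0_if_not_dominated[OF asc]
    by (intro sum.mono_neutral_right[OF finite_wcomp dom_below_subset_wcomp]) auto
  also have "\<dots> = (\<Sum>j\<in>?D. (\<Prod>i=1..n. (b i + reduced_indeg G i) choose (j i))
      * kostant n G (\<lambda>k. if k = 1 then 0 else int (indeg G k - 1) - int (j (k - 1))))"
  proof (intro sum.cong refl arg_cong2[where f = "(*)"])
    fix j assume "j \<in> ?D"
    then have "j 0 = 0" by (simp add: dom_below_def)
    then show "kostant_excess n G j
        = kostant n G (\<lambda>k. if k = 1 then 0 else int (indeg G k - 1) - int (j (k - 1)))"
      unfolding kostant_excess_def using reduced_indeg_0[OF asc]
      by (intro kostant_cong) (auto simp: reduced_indeg_def)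
  qed (simp add: binom_weight_def)
  finally show ?thesis
    unfolding supply_vec_def reduced_indeg_def by simp
qed

end
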